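(* Let $n\ge 4$ be an integer with $n=p^m$ for some prime $p$ and integer $m\ge 1$. Then the line graph $L(B(n,1))$ is a Cayley graph.
   Context: For $n\ge 4$, $B(n,1)$ is the graph whose vertices are the subsets of $[n]=\{1,\dots,n\}$ of size $1$ or $2$, with $v\sim w$ iff $v\subset w$ or $w\subset v$. The line graph $L(\Gamma)$ has the edges of $\Gamma$ as vertices, two being adjacent iff the edges share an endpoint. A graph is a Cayley graph if it is isomorphic to some $\mathrm{Cay}(G;\Omega)$ (vertex set a group $G$, $\Omega=\Omega^{-1}\not\ni 1$, $g\sim h$ iff $g^{-1}h\in\Omega$). *)

theory Defs
  imports "HOL-Algebra.Group" "HOL-Computational_Algebra.Primes"
begin

text \<open>Simple graphs are given by a vertex set V and an adjacency relation E
  (only its restriction to V matters).\<close>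

definition B_verts :: "nat \<Rightarrow> nat set set" where
  "B_verts n = {A. A \<subseteq> {1..n} \<and> (card A = 1 \<or> card A = 2)}"

definition B_adj :: "nat set \<Rightarrow> nat set \<Rightarrow> bool" where
  "B_adj v w \<longleftrightarrow> v \<subset> w \<or> w \<subset> v"

definition line_verts :: "'a set \<Rightarrow> ('a \<Rightarrow> 'a \<Rightarrow> bool) \<Rightarrow> 'a set set" where
  "line_verts V E = {{v, w} | v w. v \<in> V \<and> w \<in> V \<and> v \<noteq> w \<and> E v w}"

definition line_adj :: "'a set \<Rightarrow> 'a set \<Rightarrow> bool" where
  "line_adj e f \<longleftrightarrow> e \<noteq> f \<and> e \<inter> f \<noteq> {}"

text \<open>The group is taken with
  elements of the vertex type (no loss, since the carrier is in bijection
  with the vertex set, so any group structure can be transported).\<close>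
definition is_cayley_graph :: "'a set \<Rightarrow> ('a \<Rightarrow> 'a \<Rightarrow> bool) \<Rightarrow> bool" where
  "is_cayley_graph V E \<longleftrightarrow>
     (\<exists>(G :: 'a monoid) \<Omega> f.
        group G \<and> \<Omega> \<subseteq> carrier G \<and> \<one>\<^bsub>G\<^esub> \<notin> \<Omega> \<and>
        (\<forall>s\<in>\<Omega>. inv\<^bsub>G\<^esub> s \<in> \<Omega>) \<and>
        bij_betw f V (carrier G) \<and>
        (\<forall>x\<in>V. \<forall>y\<in>V. E x y \<longleftrightarrow> inv\<^bsub>G\<^esub> (f x) \<otimes>\<^bsub>G\<^esub> f y \<in> \<Omega>))"

end

theory Submission
  imports Defs "HOL-Algebra.Algebraic_Closure" "HOL-Algebra.Weak_Morphisms"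
    "HOL-Number_Theory.Residues"
begin

text \<open>For a prime power \<open>q\<close> the roots of \<open>X^q - X\<close> in an algebraic closure of \<open>\<int>/p\<close>
  form a field \<open>F\<close> with \<open>q\<close> elements. A vertex of \<open>L(B(q,1))\<close> is a flag \<open>{{i}, {i, j}}\<close>,
  i.e. an ordered pair \<open>(i, j)\<close> of distinct points of \<open>F\<close>, and two flags are adjacent iff they
  have the same first point or are reverse to each other. The affine group \<open>x \<mapsto> a x + b\<close> of \<open>F\<close>
  acts regularly on these pairs, and transports adjacency to right multiplication by the
  non-identity dilations \<open>x \<mapsto> u x\<close> and by the involution \<open>x \<mapsto> 1 - x\<close>.\<close>

hide_const (open) Divisibility.prime

section \<open>Frobenius map\<close>

lemma (in cring) binomial_finsum:
  assumes x: "x \<in> carrier R" and y: "y \<in> carrier R"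
  shows "(x \<oplus> y) [^] n = (\<Oplus>k\<in>{..n}. [(n choose k)] \<cdot> (x [^] k \<otimes> y [^] (n - k)))"
proof (induction n)
  case 0
  then show ?case using x y by simp
next
  case (Suc n)
  define B where "B = (\<Oplus>k\<in>{..n}. [(n choose k)] \<cdot> (x [^] k \<otimes> y [^] (n - k)))"
  have Bc: "B \<in> carrier R" unfolding B_def using x y by (auto intro!: finsum_closed)
  have "(x \<oplus> y) [^] Suc n = B \<otimes> x \<oplus> B \<otimes> y"
    using Suc Bc x y r_distr B_def by simp
  also have "B \<otimes> x = (\<Oplus>k\<in>{..n}. [(n choose k)] \<cdot> (x [^] Suc k \<otimes> y [^] (n - k)))"
    unfolding B_def using x y
    by (subst finsum_ldistr) (auto intro!: finsum_cong' simp: add_pow_ldistr add_pow_rdistr m_ac)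
  also have "B \<otimes> y = (\<Oplus>k\<in>{..n}. [(n choose k)] \<cdot> (x [^] k \<otimes> y [^] (Suc n - k)))"
    unfolding B_def using x y
    by (subst finsum_ldistr) (auto intro!: finsum_cong' simp: add_pow_ldistr add_pow_rdistr m_ac Suc_diff_le)
  also have "\<dots> = (\<Oplus>k\<in>{..Suc n}. [(n choose k)] \<cdot> (x [^] k \<otimes> y [^] (Suc n - k)))"
    using x y by (subst finsum_Suc) (auto simp: binomial_eq_0)
  also have "\<dots> = (\<Oplus>k\<in>{..n}. [(n choose Suc k)] \<cdot> (x [^] Suc k \<otimes> y [^] (n - k))) \<oplus> y [^] Suc n"
    using x y by (subst finsum_Suc2) auto
  also have "(\<Oplus>k\<in>{..n}. [(n choose k)] \<cdot> (x [^] Suc k \<otimes> y [^] (n - k)))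
      \<oplus> ((\<Oplus>k\<in>{..n}. [(n choose Suc k)] \<cdot> (x [^] Suc k \<otimes> y [^] (n - k))) \<oplus> y [^] Suc n)
    = (\<Oplus>k\<in>{..n}. [(Suc n choose Suc k)] \<cdot> (x [^] Suc k \<otimes> y [^] (n - k))) \<oplus> y [^] Suc n"
    using x y by (simp add: finsum_addf[symmetric] add.nat_pow_mult a_assoc[symmetric] finsum_closed)
  also have "\<dots> = (\<Oplus>k\<in>{..Suc n}. [(Suc n choose k)] \<cdot> (x [^] k \<otimes> y [^] (Suc n - k)))"
    using x y by (subst finsum_Suc2) auto
  finally show ?case .
qed

lemma (in cring) frobenius_add:
  fixes p :: nat
  assumes p: "prime p" and char: "[p] \<cdot> \<one> = \<zero>"
    and x: "x \<in> carrier R" and y: "y \<in> carrier R"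
  shows "(x \<oplus> y) [^] p = x [^] p \<oplus> y [^] p"
proof -
  define f where "f = (\<lambda>k. [(p choose k)] \<cdot> (x [^] k \<otimes> y [^] (p - k)))"
  have f_closed: "f \<in> A \<rightarrow> carrier R" for A unfolding f_def using x y by auto
  have middle_terms: "f k = \<zero>" if "k \<in> {1..<p}" for k
  proof -
    have "p dvd p choose k"
      using that p by (intro dvd_choose_prime) auto
    then obtain c where c: "p choose k = p * c" ..
    have "[p] \<cdot> (x [^] k \<otimes> y [^] (p - k)) = ([p] \<cdot> \<one>) \<otimes> (x [^] k \<otimes> y [^] (p - k))"
      using x y by (simp add: add_pow_ldistr)
    then show ?thesis
      unfolding f_def c using x y char by (simp add: add.nat_pow_pow[symmetric])
  qed
  have p2: "p \<ge> 2" using prime_ge_2_nat[OF p] .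
  then have "{..p} = insert 0 (insert p {1..<p})" by auto
  then have "(x \<oplus> y) [^] p = finsum R f (insert 0 (insert p {1..<p}))"
    using binomial_finsum[OF x y] by (simp add: f_def)
  also have "\<dots> = f 0 \<oplus> (f p \<oplus> finsum R f {1..<p})"
    using p2 f_closed[of UNIV] by (simp add: finsum_insert Pi_def)
  also have "finsum R f {1..<p} = \<zero>"
    using finsum_cong'[of "{1..<p}" "{1..<p}" "\<lambda>_. \<zero>" f] middle_terms by simp
  finally show ?thesis unfolding f_def using x y by (simp add: a_ac)
qed

lemma (in cring) frobenius_pow_add:
  fixes p :: nat
  assumes "prime p" and "[p] \<cdot> \<one> = \<zero>" and x: "x \<in> carrier R" and y: "y \<in> carrier R"
  shows "(x \<oplus> y) [^] (p ^ m) = x [^] (p ^ m) \<oplus> y [^] (p ^ m)"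
proof (induction m)
  case (Suc m)
  have "(x \<oplus> y) [^] (p ^ Suc m) = ((x \<oplus> y) [^] (p ^ m)) [^] p"
    using x y by (simp add: nat_pow_pow mult.commute)
  also have "\<dots> = x [^] (p ^ Suc m) \<oplus> y [^] (p ^ Suc m)"
    using Suc frobenius_add[OF assms(1,2)] x y by (simp add: nat_pow_pow mult.commute)
  finally show ?case .
qed (use x y in simp)

section \<open>The roots of X^q - X\<close>

primrec geom_sum :: "('a, 'b) ring_scheme \<Rightarrow> 'a \<Rightarrow> 'a \<Rightarrow> nat \<Rightarrow> 'a" where
  "geom_sum R c x 0 = \<zero>\<^bsub>R\<^esub>"
| "geom_sum R c x (Suc n) = c \<otimes>\<^bsub>R\<^esub> geom_sum R c x n \<oplus>\<^bsub>R\<^esub> x [^]\<^bsub>R\<^esub> n"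

lemma (in ring) geom_sum_closed:
  "c \<in> carrier R \<Longrightarrow> x \<in> carrier R \<Longrightarrow> geom_sum R c x n \<in> carrier R"
  by (induction n) auto

lemma (in cring) diff_mult_geom_sum:
  assumes c: "c \<in> carrier R" and x: "x \<in> carrier R"
  shows "(x \<ominus> c) \<otimes> geom_sum R c x n = x [^] n \<ominus> c [^] n"
proof (induction n)
  case 0
  then show ?case using x c by (simp add: minus_eq r_neg)
next
  case (Suc n)
  have g: "geom_sum R c x n \<in> carrier R" using geom_sum_closed c x by blast
  have "(x \<ominus> c) \<otimes> geom_sum R c x (Suc n) = c \<otimes> ((x \<ominus> c) \<otimes> geom_sum R c x n) \<oplus> (x \<ominus> c) \<otimes> x [^] n"
  proof -
    have xn: "x [^] n \<in> carrier R" using x by simp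
    show ?thesis using g c x xn by (simp only: geom_sum.simps) algebra
  qed
  also have "\<dots> = c \<otimes> (x [^] n \<ominus> c [^] n) \<oplus> (x \<ominus> c) \<otimes> x [^] n" using Suc by simp
  also have "\<dots> = x [^] Suc n \<ominus> c [^] Suc n"
  proof -
    have xn: "x [^] n \<in> carrier R" "c [^] n \<in> carrier R" using x c by simp_all
    show ?thesis using c x xn by (simp only: nat_pow_Suc) algebra
  qed
  finally show ?case .
qed

lemma (in cring) geom_sum_diag:
  assumes a: "a \<in> carrier R"
  shows "geom_sum R a a (Suc n) = [Suc n] \<cdot> (a [^] n)"
proof (induction n)
  case 0
  then show ?case using a by simp
next
  case (Suc n)
  have "geom_sum R a a (Suc (Suc n)) = a \<otimes> ([Suc n] \<cdot> (a [^] n)) \<oplus> a [^] Suc n"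
    using Suc by simp
  also have "\<dots> = [Suc n] \<cdot> (a [^] Suc n) \<oplus> a [^] Suc n"
    using a by (simp add: add_pow_rdistr r_distr m_comm)
  also have "\<dots> = [Suc (Suc n)] \<cdot> (a [^] Suc n)"
    by (simp only: add.nat_pow_Suc[symmetric])
  finally show ?case .
qed

lemma (in ring_hom_ring) hom_geom_sum:
  "c \<in> carrier R \<Longrightarrow> x \<in> carrier R \<Longrightarrow> h (geom_sum R c x n) = geom_sum S (h c) (h x) n"
proof (induction n)
  case 0 then show ?case by simp
next
  case (Suc n)
  have "geom_sum R c x n \<in> carrier R" using Suc(2,3) R.geom_sum_closed by blast
  then show ?case using Suc by (simp add: hom_nat_pow)
qed

lemma (in domain) poly_of_const_closed:
  assumes "a \<in> carrier R"
  shows "poly_of_const a \<in> carrier (poly_ring R)"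
proof -
  interpret ring_hom_ring "R\<lparr>carrier := carrier R\<rparr>" "poly_ring R" poly_of_const
    using canonical_embedding_ring_hom[OF carrier_is_subring] .
  show ?thesis using hom_closed assms by simp
qed

lemma (in field) var_minus_const:
  assumes "a \<in> carrier R"
  shows "var R \<ominus>\<^bsub>poly_ring R\<^esub> poly_of_const a = [\<one>, \<ominus> a]"
proof -
  have "var R \<ominus>\<^bsub>poly_ring R\<^esub> poly_of_const a = poly_add (var R) (map (\<lambda>b. \<ominus> b) (poly_of_const a))"
    unfolding a_minus_def univ_poly_add
    using univ_poly_a_inv_def'[OF carrier_is_subring poly_of_const_closed[OF assms]] by simp
  also have "\<dots> = [\<one>, \<ominus> a]" unfolding var_def poly_of_const_def using assms by auto
  finally show ?thesis .
qed

lemma (in field) var_pow_minus_var_factor: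
  assumes a: "a \<in> carrier R" and aq: "a [^] q = a"
  shows "var R [^]\<^bsub>poly_ring R\<^esub> q \<ominus>\<^bsub>poly_ring R\<^esub> var R =
    [\<one>, \<ominus> a] \<otimes>\<^bsub>poly_ring R\<^esub>
      (geom_sum (poly_ring R) (poly_of_const a) (var R) q \<ominus>\<^bsub>poly_ring R\<^esub> \<one>\<^bsub>poly_ring R\<^esub>)"
proof -
  let ?P = "poly_ring R"
  interpret P: domain ?P using univ_poly_is_domain[OF carrier_is_subring] .
  interpret CE: ring_hom_ring "R\<lparr>carrier := carrier R\<rparr>" ?P poly_of_const
    using canonical_embedding_ring_hom[OF carrier_is_subring] .
  define c where "c = poly_of_const a"
  define x where "x = var R"
  define G where "G = geom_sum ?P c x q"
  have x: "x \<in> carrier ?P" unfolding x_def using var_closed(1)[OF carrier_is_subring] .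
  have c: "c \<in> carrier ?P" unfolding c_def using poly_of_const_closed a .
  have G: "G \<in> carrier ?P" unfolding G_def using P.geom_sum_closed c x by blast
  have "c [^]\<^bsub>?P\<^esub> q = poly_of_const (a [^]\<^bsub>R\<lparr>carrier := carrier R\<rparr>\<^esub> q)"
    unfolding c_def using CE.hom_nat_pow a by simp
  then have cq: "c [^]\<^bsub>?P\<^esub> q = c" unfolding c_def using aq by (simp add: nat_pow_def)
  have "[\<one>, \<ominus> a] \<otimes>\<^bsub>?P\<^esub> (G \<ominus>\<^bsub>?P\<^esub> \<one>\<^bsub>?P\<^esub>) = (x \<ominus>\<^bsub>?P\<^esub> c) \<otimes>\<^bsub>?P\<^esub> G \<ominus>\<^bsub>?P\<^esub> (x \<ominus>\<^bsub>?P\<^esub> c)"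
    unfolding var_minus_const[OF a, symmetric] c_def[symmetric] x_def[symmetric]
    using x c G by (simp add: a_minus_def P.r_distr P.r_minus)
  also have "\<dots> = x [^]\<^bsub>?P\<^esub> q \<ominus>\<^bsub>?P\<^esub> x"
    unfolding G_def P.diff_mult_geom_sum[OF c x] cq using x c
    by (simp add: a_minus_def P.minus_add P.a_ac P.r_neg P.r_neg1 P.r_neg2)
  finally show ?thesis unfolding G_def c_def x_def by simp
qed

lemma (in field) eval_geom_sum_var:
  assumes "a \<in> carrier R"
  shows "eval (geom_sum (poly_ring R) (poly_of_const a) (var R) n) a = geom_sum R a a n"
proof -
  interpret E: ring_hom_cring "poly_ring R" R "\<lambda>p. eval p a"
    using eval_cring_hom[OF carrier_is_subring assms] .
  have "poly_of_const a \<in> carrier (poly_ring R)" using poly_of_const_closed assms .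
  moreover have "eval (poly_of_const a) a = a" using assms by (auto simp: poly_of_const_def)
  ultimately show ?thesis
    using E.ring.hom_geom_sum var_closed(1)[OF carrier_is_subring] eval_var[OF assms] by simp
qed

text \<open>In characteristic dividing \<open>q\<close> the polynomial \<open>X^q - X\<close> has only simple roots: its
  cofactor at a root \<open>a\<close> evaluates to \<open>q a^(q-1) - 1 = -1\<close>.\<close>

lemma (in field) var_pow_minus_var_no_double_root:
  fixes q :: nat
  assumes char: "[q] \<cdot> \<one> = \<zero>" and q: "q \<ge> 1"
    and a: "a \<in> carrier R" and aq: "a [^] q = a"
  shows "\<not> ([\<one>, \<ominus> a] [^]\<^bsub>poly_ring R\<^esub> (2::nat)) pdivides
            (var R [^]\<^bsub>poly_ring R\<^esub> q \<ominus>\<^bsub>poly_ring R\<^esub> var R)"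
proof
  let ?P = "poly_ring R"
  interpret P: domain ?P using univ_poly_is_domain[OF carrier_is_subring] .
  interpret E: ring_hom_cring ?P R "\<lambda>p. eval p a"
    using eval_cring_hom[OF carrier_is_subring a] .
  define D where "D = [\<one>, \<ominus> a]"
  define G where "G = geom_sum ?P (poly_of_const a) (var R) q"
  note X = var_closed(1)[OF carrier_is_subring] and c = poly_of_const_closed[OF a]
  have D: "D \<in> carrier ?P" "D \<noteq> \<zero>\<^bsub>?P\<^esub>"
    unfolding D_def univ_poly_zero using var_minus_const[OF a] X c by (metis P.minus_closed, simp)
  have G: "G \<in> carrier ?P" unfolding G_def by (rule P.geom_sum_closed[OF c X])
  assume "(D [^]\<^bsub>?P\<^esub> (2::nat)) pdivides (var R [^]\<^bsub>?P\<^esub> q \<ominus>\<^bsub>?P\<^esub> var R)"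
  then obtain H where H: "H \<in> carrier ?P"
    and "D \<otimes>\<^bsub>?P\<^esub> (G \<ominus>\<^bsub>?P\<^esub> \<one>\<^bsub>?P\<^esub>) = D \<otimes>\<^bsub>?P\<^esub> (D \<otimes>\<^bsub>?P\<^esub> H)"
    unfolding pdivides_def var_pow_minus_var_factor[OF a aq] D_def[symmetric] G_def[symmetric]
    using D by (auto elim!: dividesE simp: numeral_2_eq_2 P.m_assoc)
  then have GH: "G \<ominus>\<^bsub>?P\<^esub> \<one>\<^bsub>?P\<^esub> = D \<otimes>\<^bsub>?P\<^esub> H" using P.m_lcancel D G H by simp
  have eval_D: "eval D a = \<zero>"
    unfolding D_def var_minus_const[OF a, symmetric] a_minus_def
    using a X c eval_var[OF a] by (simp add: poly_of_const_def r_neg)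
  have eval_G: "eval G a = \<zero>"
  proof -
    have "eval G a = [q] \<cdot> (\<one> \<otimes> a [^] (q - 1))"
      unfolding G_def eval_geom_sum_var[OF a] using geom_sum_diag[OF a, of "q - 1"] q a by simp
    also have "\<dots> = \<zero>" using a char by (simp only: add_pow_ldistr[symmetric] one_closed nat_pow_closed) simp
    finally show ?thesis .
  qed
  have "eval (G \<ominus>\<^bsub>?P\<^esub> \<one>\<^bsub>?P\<^esub>) a = \<ominus> \<one>" using eval_G G by (simp add: a_minus_def)
  moreover have "eval (D \<otimes>\<^bsub>?P\<^esub> H) a = \<zero>" using eval_D D H by simp
  ultimately have "\<ominus> \<one> = \<zero>" using GH by simp
  then show False using one_not_zero by (metis a_inv_def add.inv_eq_1_iff one_closed)
qed

lemma (in field) degree_var_pow_minus_var: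
  fixes q :: nat
  assumes "q \<ge> 2"
  shows "degree (var R [^]\<^bsub>poly_ring R\<^esub> q \<ominus>\<^bsub>poly_ring R\<^esub> var R) = q"
proof -
  have X: "var R \<in> carrier (poly_ring R)" using var_closed(1)[OF carrier_is_subring] .
  have "var R [^]\<^bsub>poly_ring R\<^esub> q \<ominus>\<^bsub>poly_ring R\<^esub> var R =
      poly_add (monom \<one> q) (map (\<lambda>b. \<ominus> b) (var R))"
    unfolding a_minus_def univ_poly_add
    using unitary_monom_eq_var_pow[OF carrier_is_subring, of q]
      univ_poly_a_inv_def'[OF carrier_is_subring X] by (simp del: poly_add.simps)
  moreover have "polynomial (carrier R) (monom \<one> q)"
    using carrier_is_subring by (intro monom_is_polynomial) auto
  moreover have "polynomial (carrier R) (map (\<lambda>b. \<ominus> b) (var R))"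
    unfolding var_def by (intro polynomialI) auto
  moreover have "degree (monom \<one> q) = q" "degree (map (\<lambda>b. \<ominus> b) (var R)) = 1"
    unfolding monom_def var_def by simp_all
  ultimately show ?thesis
    using poly_add_degree_eq[OF carrier_is_subring] assms by (simp del: poly_add.simps)
qed

lemma (in field) eval_var_pow_minus_var:
  fixes q :: nat
  assumes "x \<in> carrier R"
  shows "eval (var R [^]\<^bsub>poly_ring R\<^esub> q \<ominus>\<^bsub>poly_ring R\<^esub> var R) x = x [^] q \<ominus> x"
proof -
  interpret E: ring_hom_cring "poly_ring R" R "\<lambda>p. eval p x"
    using eval_cring_hom[OF carrier_is_subring assms] .
  show ?thesis
    unfolding a_minus_def using var_closed(1)[OF carrier_is_subring] E.ring.hom_nat_pow eval_var[OF assms]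
    by simp
qed

lemma size_eq_card_set_mset:
  assumes "\<And>x. count M x \<le> 1"
  shows "size M = card (set_mset M)"
proof -
  have "M = mset_set (set_mset M)"
    by (rule multiset_eqI) (metis assms count_mset_set(1,3) finite_set_mset le_antisym
        not_in_iff count_greater_zero_iff less_one not_le)
  then show ?thesis by (metis size_mset_set)
qed

text \<open>\<open>X^q - X\<close> has coefficients in the base field, so it splits in the closure, and its
  roots are simple.\<close>

lemma (in algebraic_closure) card_roots_var_pow_minus_var:
  fixes q :: nat
  assumes char: "[q] \<cdot> \<one> = \<zero>" and q: "q \<ge> 2"
  shows "finite {x \<in> carrier L. x [^] q = x} \<and> card {x \<in> carrier L. x [^] q = x} = q"
proof -
  have K: "subring K L" using subfieldE(1)[OF subfield_axioms] .
  interpret PL: domain "poly_ring L" using univ_poly_is_domain[OF carrier_is_subring] .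
  define P where "P = var L [^]\<^bsub>poly_ring L\<^esub> q \<ominus>\<^bsub>poly_ring L\<^esub> var L"
  have XK: "var L \<in> carrier (univ_poly L K)" using var_closed(1)[OF K] .
  have "var L [^]\<^bsub>univ_poly L K\<^esub> q = var L [^]\<^bsub>poly_ring L\<^esub> q"
    using unitary_monom_eq_var_pow[OF K, of q] unitary_monom_eq_var_pow[OF carrier_is_subring, of q]
    by simp
  then have "P = var L [^]\<^bsub>univ_poly L K\<^esub> q \<ominus>\<^bsub>univ_poly L K\<^esub> var L"
    unfolding P_def using univ_poly_a_minus_consistent[OF K XK] by simp
  moreover interpret PK: domain "univ_poly L K" using univ_poly_is_domain[OF K] .
  have "var L [^]\<^bsub>univ_poly L K\<^esub> q \<ominus>\<^bsub>univ_poly L K\<^esub> var L \<in> carrier (univ_poly L K)"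
    using XK by simp
  ultimately have "splitted P" using roots_over_subfield by simp
  moreover have "degree P = q" unfolding P_def using degree_var_pow_minus_var[OF q] .
  ultimately have size: "size (roots P) = q" unfolding splitted_def by simp
  have P: "P \<in> carrier (poly_ring L)" "P \<noteq> []"
    using \<open>degree P = q\<close> q var_closed(1)[OF carrier_is_subring] unfolding P_def by auto
  have roots: "set_mset (roots P) = {x \<in> carrier L. x [^] q = x}"
    using roots_mem_iff_is_root[OF P(1)] eval_var_pow_minus_var P(2) unfolding is_root_def P_def
    by (auto simp del: r_right_minus_eq simp add: r_right_minus_eq[symmetric])
  have "count (roots P) a \<le> 1" for a
  proof (rule ccontr)
    assume "\<not> count (roots P) a \<le> 1"
    then have mult: "2 \<le> alg_mult P a" using alg_mult_eq_count_roots[OF P(1)] by simp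
    then have "a \<in># roots P" using alg_mult_eq_count_roots[OF P(1)] by (simp flip: count_greater_zero_iff)
    then have a: "a \<in> carrier L" "a [^] q = a" using roots by auto
    have "([\<one>, \<ominus> a] [^]\<^bsub>poly_ring L\<^esub> (2::nat)) pdivides P"
      using le_alg_mult_imp_pdivides[OF a(1) P(1) mult] .
    then show False using var_pow_minus_var_no_double_root[OF char _ a] q unfolding P_def by simp
  qed
  then show ?thesis
    using size_eq_card_set_mset size roots by (metis finite_set_mset)
qed

section \<open>Finite fields of prime power order\<close>

lemma (in field) pow_fixed_points_subfield:
  fixes p :: nat
  assumes p: "prime p" and char: "[p] \<cdot> \<one> = \<zero>"
  shows "subfield {x \<in> carrier R. x [^] (p ^ m) = x} R"
proof (rule subfieldI')
  let ?q = "p ^ m"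
  let ?S = "{x \<in> carrier R. x [^] ?q = x}"
  have q_pos: "?q > 0" using prime_gt_0_nat[OF p] by simp
  note frob = frobenius_pow_add[OF p char]
  show "subring ?S R"
  proof (rule subringI)
    show "\<ominus> x \<in> ?S" if "x \<in> ?S" for x
    proof -
      have x: "x \<in> carrier R" "x [^] ?q = x" using that by auto
      have "\<zero> = (x \<oplus> \<ominus> x) [^] ?q" using x q_pos by (simp add: r_neg nat_pow_zero)
      also have "\<dots> = x \<oplus> (\<ominus> x) [^] ?q" using frob x by simp
      finally have "(\<ominus> x) [^] ?q \<oplus> x = \<zero>" using x by (simp add: a_comm)
      then have "\<ominus> x = (\<ominus> x) [^] ?q" using x by (intro minus_equality) auto
      then show ?thesis using x by simp
    qed
  qed (auto simp: frob nat_pow_distrib)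
  show "inv x \<in> ?S" if "x \<in> ?S - {\<zero>}" for x
  proof -
    have x: "x \<in> carrier R" "x [^] ?q = x" "x \<in> Units R" using that field_Units by auto
    have "x \<otimes> (inv x) [^] ?q = \<one>"
      using x nat_pow_distrib[of x "inv x" ?q] by simp
    then have "inv x = (inv x) [^] ?q" using x by (intro comm_inv_char) auto
    then show ?thesis using x by simp
  qed
qed

lemma (in residues) add_pow_one_eq_mod: "[k] \<cdot> \<one> = int k mod m"
proof (induction k)
  case 0 then show ?case by (simp add: res_zero_eq)
next
  case (Suc k) then show ?case by (simp add: res_add_eq res_one_eq mod_add_right_eq ac_simps)
qed

lemma (in ring_hom_ring) hom_add_pow_one: "h ([(k::nat)] \<cdot>\<^bsub>R\<^esub> \<one>\<^bsub>R\<^esub>) = [k] \<cdot>\<^bsub>S\<^esub> \<one>\<^bsub>S\<^esub>"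
proof (induction k)
  case 0 then show ?case by simp
next
  case (Suc k)
  have "[k] \<cdot>\<^bsub>R\<^esub> \<one>\<^bsub>R\<^esub> \<in> carrier R" by simp
  then show ?case using Suc by simp
qed

lemma finite_field_exists:
  fixes p m :: nat
  assumes p: "prime p" and m: "m \<ge> 1"
  shows "\<exists>F :: ((int list \<times> nat) multiset \<Rightarrow> int) ring.
           field F \<and> finite (carrier F) \<and> card (carrier F) = p ^ m"
proof -
  interpret Zp: residues_prime p "residue_ring p" by unfold_locales (rule p)
  obtain L :: "((int list \<times> nat) multiset \<Rightarrow> int) ring"
    where alg: "algebraic_closure L (Zp.indexed_const ` carrier (residue_ring p))"
      and hom: "Zp.indexed_const \<in> ring_hom (residue_ring p) L"
    by (rule Zp.exists_closure)
  interpret L: algebraic_closure L "Zp.indexed_const ` carrier (residue_ring p)" by (rule alg)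
  interpret H: ring_hom_ring "residue_ring p" L Zp.indexed_const
    using hom by (intro ring_hom_ringI2) (simp_all add: Zp.ring_axioms L.ring_axioms)
  have "[p] \<cdot>\<^bsub>residue_ring p\<^esub> \<one>\<^bsub>residue_ring p\<^esub> = \<zero>\<^bsub>residue_ring p\<^esub>"
    using Zp.add_pow_one_eq_mod[of p] by (simp add: Zp.res_zero_eq)
  then have char: "[p] \<cdot>\<^bsub>L\<^esub> \<one>\<^bsub>L\<^esub> = \<zero>\<^bsub>L\<^esub>"
    using H.hom_add_pow_one[of p] by simp
  have "p ^ m = p * p ^ (m - 1)" using m by (simp add: power_eq_if)
  then have "[(p ^ m)] \<cdot>\<^bsub>L\<^esub> \<one>\<^bsub>L\<^esub> = [(p ^ (m - 1))] \<cdot>\<^bsub>L\<^esub> ([p] \<cdot>\<^bsub>L\<^esub> \<one>\<^bsub>L\<^esub>)"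
    by (simp add: L.add.nat_pow_pow)
  then have char_q: "[(p ^ m)] \<cdot>\<^bsub>L\<^esub> \<one>\<^bsub>L\<^esub> = \<zero>\<^bsub>L\<^esub>"
    using char by simp
  have "p ^ 1 \<le> p ^ m" using m prime_gt_0_nat[OF p] by (intro power_increasing) auto
  then have q2: "p ^ m \<ge> 2" using prime_ge_2_nat[OF p] by simp
  define S where "S = {x \<in> carrier L. x [^]\<^bsub>L\<^esub> (p ^ m) = x}"
  have "field (L\<lparr>carrier := S\<rparr>)"
    unfolding S_def by (intro L.subfield_iff(2) L.pow_fixed_points_subfield[OF p char])
  moreover have "finite S \<and> card S = p ^ m"
    unfolding S_def by (rule L.card_roots_var_pow_minus_var[OF char_q q2])
  ultimately show ?thesis by (intro exI[of _ "L\<lparr>carrier := S\<rparr>"]) simp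
qed

section \<open>Line graph of B(n,1) and Cayley graphs\<close>

definition flag :: "'a \<Rightarrow> 'a \<Rightarrow> 'a set set" where
  "flag i j = {{i}, {i, j}}"

lemma flag_eq_iff:
  assumes "i \<noteq> j" and "k \<noteq> l"
  shows "flag i j = flag k l \<longleftrightarrow> i = k \<and> j = l"
  using assms unfolding flag_def by (auto simp: doubleton_eq_iff)

lemma line_adj_flag_iff:
  assumes "i \<noteq> j" and "k \<noteq> l"
  shows "line_adj (flag i j) (flag k l) \<longleftrightarrow> (i = k \<and> j \<noteq> l) \<or> (i = l \<and> j = k)"
  using assms unfolding line_adj_def flag_eq_iff[OF assms] unfolding flag_def
  by (auto simp: doubleton_eq_iff)

lemma B_verts_psubsetE:
  assumes "v \<in> B_verts n" and "w \<in> B_verts n" and "v \<subset> w"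
  obtains i j where "v = {i}" and "w = {i, j}" and "i \<noteq> j"
proof -
  have "finite w" using assms(2) unfolding B_verts_def by (auto intro: finite_subset)
  then have "card v < card w" using assms(3) by (rule psubset_card_mono)
  then have "card v = 1" and "card w = 2" using assms(1,2) unfolding B_verts_def by auto
  then obtain i a b where "v = {i}" "w = {a, b}" "a \<noteq> b"
    by (auto simp: card_1_singleton_iff card_2_iff)
  moreover have "i = a \<or> i = b" using assms(3) \<open>v = {i}\<close> \<open>w = {a, b}\<close> by auto
  ultimately show ?thesis using that by (metis insert_commute)
qed

lemma line_verts_B_verts:
  "line_verts (B_verts n) B_adj = {flag i j | i j. i \<in> {1..n} \<and> j \<in> {1..n} \<and> i \<noteq> j}"
  (is "_ = ?F")
proof (intro equalityI subsetI)
  have flag: "{v, w} \<in> ?F" if vw: "v \<in> B_verts n" "w \<in> B_verts n" "v \<subset> w" for v w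
  proof -
    obtain i j where ij: "v = {i}" "w = {i, j}" "i \<noteq> j" by (rule B_verts_psubsetE[OF vw])
    moreover have "i \<in> {1..n}" "j \<in> {1..n}" using vw(2) unfolding ij B_verts_def by auto
    ultimately show ?thesis unfolding flag_def by blast
  qed
  fix e assume "e \<in> line_verts (B_verts n) B_adj"
  then obtain v w where e: "e = {v, w}" and vw: "v \<in> B_verts n" "w \<in> B_verts n" "v \<subset> w \<or> w \<subset> v"
    unfolding line_verts_def B_adj_def by auto
  show "e \<in> ?F"
  proof (cases "v \<subset> w")
    case True
    then show ?thesis using flag vw e by blast
  next
    case False
    then show ?thesis using flag[of w v] vw e by (simp add: insert_commute)
  qed
next
  fix e assume "e \<in> ?F"
  then obtain i j where e: "e = {{i}, {i, j}}" and ij: "i \<in> {1..n}" "j \<in> {1..n}" "i \<noteq> j"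
    unfolding flag_def by auto
  have "{i} \<in> B_verts n" "{i, j} \<in> B_verts n" "{i} \<noteq> {i, j}" "B_adj {i} {i, j}"
    using ij unfolding B_verts_def B_adj_def by auto
  then show "e \<in> line_verts (B_verts n) B_adj"
    unfolding line_verts_def e by (intro CollectI exI[of _ "{i}"] exI[of _ "{i, j}"]) simp
qed

text \<open>The group required by \<open>is_cayley_graph\<close> has the vertices as elements; any group in
  bijection with the vertices is transported there by \<open>image_group\<close>.\<close>

lemma is_cayley_graphI:
  fixes H :: "('b, 'c) monoid_scheme" and \<psi> :: "'b \<Rightarrow> 'a"
  assumes "group H" and bij: "bij_betw \<psi> (carrier H) V"
    and \<Omega>: "\<Omega> \<subseteq> carrier H" "\<one>\<^bsub>H\<^esub> \<notin> \<Omega>" "\<And>s. s \<in> \<Omega> \<Longrightarrow> inv\<^bsub>H\<^esub> s \<in> \<Omega>"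
    and adj: "\<And>g h. g \<in> carrier H \<Longrightarrow> h \<in> carrier H \<Longrightarrow>
      E (\<psi> g) (\<psi> h) \<longleftrightarrow> (\<exists>k\<in>\<Omega>. h = g \<otimes>\<^bsub>H\<^esub> k)"
  shows "is_cayley_graph V E"
proof -
  interpret H: group H by fact
  have inj: "inj_on \<psi> (carrier H)" and V: "V = \<psi> ` carrier H"
    using bij by (auto simp: bij_betw_def)
  have "weak_group_morphism \<psi> {\<one>\<^bsub>H\<^esub>} H"
    using inj by (intro weak_group_morphismsI H.one_is_normal)
      (auto simp: inj_on_eq_iff, metis H.inv_closed H.inv_equality H.inv_inv)
  then interpret \<psi>: group_hom H "image_group \<psi> H" \<psi>
    by (rule H.weak_group_morphism_group_hom)
  let ?G = "image_group \<psi> H"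
  have cayley_adj: "E (\<psi> g) (\<psi> h) \<longleftrightarrow> inv\<^bsub>?G\<^esub> (\<psi> g) \<otimes>\<^bsub>?G\<^esub> \<psi> h \<in> \<psi> ` \<Omega>"
    if "g \<in> carrier H" "h \<in> carrier H" for g h
  proof -
    have "(\<exists>k\<in>\<Omega>. h = g \<otimes>\<^bsub>H\<^esub> k) \<longleftrightarrow> inv\<^bsub>H\<^esub> g \<otimes>\<^bsub>H\<^esub> h \<in> \<Omega>"
    proof
      show "inv\<^bsub>H\<^esub> g \<otimes>\<^bsub>H\<^esub> h \<in> \<Omega>" if "\<exists>k\<in>\<Omega>. h = g \<otimes>\<^bsub>H\<^esub> k"
        using that \<open>g \<in> carrier H\<close> \<Omega>(1) by (auto simp: H.m_assoc[symmetric] subsetD)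
      have "h = g \<otimes>\<^bsub>H\<^esub> (inv\<^bsub>H\<^esub> g \<otimes>\<^bsub>H\<^esub> h)" using that by (simp add: H.m_assoc[symmetric])
      then show "\<exists>k\<in>\<Omega>. h = g \<otimes>\<^bsub>H\<^esub> k" if "inv\<^bsub>H\<^esub> g \<otimes>\<^bsub>H\<^esub> h \<in> \<Omega>"
        using that by blast
    qed
    also have "\<dots> \<longleftrightarrow> \<psi> (inv\<^bsub>H\<^esub> g \<otimes>\<^bsub>H\<^esub> h) \<in> \<psi> ` \<Omega>"
      using that \<Omega>(1) by (intro inj_on_image_mem_iff[OF inj, symmetric]) auto
    also have "\<psi> (inv\<^bsub>H\<^esub> g \<otimes>\<^bsub>H\<^esub> h) = inv\<^bsub>?G\<^esub> (\<psi> g) \<otimes>\<^bsub>?G\<^esub> \<psi> h"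
      using that by (simp add: \<psi>.hom_mult)
    finally show ?thesis using adj that by simp
  qed
  show ?thesis
    unfolding is_cayley_graph_def
  proof (intro exI conjI)
    show "group ?G" by (rule \<psi>.H.is_group)
    show "\<psi> ` \<Omega> \<subseteq> carrier ?G" using \<Omega>(1) unfolding image_group_carrier by (rule image_mono)
    show "\<one>\<^bsub>?G\<^esub> \<notin> \<psi> ` \<Omega>"
      using \<Omega>(1,2) inj_on_image_mem_iff[OF inj H.one_closed, of \<Omega>] unfolding image_group_one by blast
    show "\<forall>s\<in>\<psi> ` \<Omega>. inv\<^bsub>?G\<^esub> s \<in> \<psi> ` \<Omega>"
    proof
      fix s assume "s \<in> \<psi> ` \<Omega>"
      then obtain k where k: "k \<in> \<Omega>" "s = \<psi> k" by blast
      then have "inv\<^bsub>?G\<^esub> s = \<psi> (inv\<^bsub>H\<^esub> k)" using \<Omega>(1) by (simp add: subsetD)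
      then show "inv\<^bsub>?G\<^esub> s \<in> \<psi> ` \<Omega>" using \<Omega>(3) k by blast
    qed
    show "bij_betw id V (carrier ?G)" by (simp add: image_group_carrier V)
    show "\<forall>x\<in>V. \<forall>y\<in>V. E x y \<longleftrightarrow> inv\<^bsub>?G\<^esub> (id x) \<otimes>\<^bsub>?G\<^esub> id y \<in> \<psi> ` \<Omega>"
      using cayley_adj V by auto
  qed
qed

section \<open>The affine group of a finite field\<close>

lemma (in field) inv_nonzero:
  assumes "a \<in> carrier R - {\<zero>}"
  shows "inv a \<in> carrier R - {\<zero>}" and "inv a \<otimes> a = \<one>" and "a \<otimes> inv a = \<one>"
proof -
  have a: "a \<in> Units R" using assms field_Units by simp
  then show "inv a \<in> carrier R - {\<zero>}" using Units_inv_Units field_Units by blast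
  show "inv a \<otimes> a = \<one>" and "a \<otimes> inv a = \<one>" using a by simp_all
qed

text \<open>The pair \<open>(a, b)\<close> stands for the affine map \<open>x \<mapsto> a x + b\<close>; the product is composition.\<close>

definition affine_group :: "('a, 'b) ring_scheme \<Rightarrow> ('a \<times> 'a) monoid" where
  "affine_group R =
     \<lparr>carrier = (carrier R - {\<zero>\<^bsub>R\<^esub>}) \<times> carrier R,
      monoid.mult = (\<lambda>(a, b) (c, d). (a \<otimes>\<^bsub>R\<^esub> c, a \<otimes>\<^bsub>R\<^esub> d \<oplus>\<^bsub>R\<^esub> b)),
      one = (\<one>\<^bsub>R\<^esub>, \<zero>\<^bsub>R\<^esub>)\<rparr>"

lemma affine_group_simps [simp]:
  "carrier (affine_group R) = (carrier R - {\<zero>\<^bsub>R\<^esub>}) \<times> carrier R"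
  "(a, b) \<otimes>\<^bsub>affine_group R\<^esub> (c, d) = (a \<otimes>\<^bsub>R\<^esub> c, a \<otimes>\<^bsub>R\<^esub> d \<oplus>\<^bsub>R\<^esub> b)"
  "\<one>\<^bsub>affine_group R\<^esub> = (\<one>\<^bsub>R\<^esub>, \<zero>\<^bsub>R\<^esub>)"
  unfolding affine_group_def by simp_all

lemma (in field) affine_group_is_group: "group (affine_group R)"
proof (rule groupI)
  fix g h assume "g \<in> carrier (affine_group R)" and "h \<in> carrier (affine_group R)"
  then show "g \<otimes>\<^bsub>affine_group R\<^esub> h \<in> carrier (affine_group R)"
    by (cases g, cases h) (auto simp: integral_iff)
next
  fix f g h
  assume "f \<in> carrier (affine_group R)" "g \<in> carrier (affine_group R)" "h \<in> carrier (affine_group R)"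
  then show "f \<otimes>\<^bsub>affine_group R\<^esub> g \<otimes>\<^bsub>affine_group R\<^esub> h =
      f \<otimes>\<^bsub>affine_group R\<^esub> (g \<otimes>\<^bsub>affine_group R\<^esub> h)"
    by (cases f, cases g, cases h) (simp add: m_assoc r_distr a_assoc)
next
  fix g assume g: "g \<in> carrier (affine_group R)"
  then show "\<one>\<^bsub>affine_group R\<^esub> \<otimes>\<^bsub>affine_group R\<^esub> g = g" by (cases g) simp
  obtain a b where ab: "g = (a, b)" "a \<in> carrier R - {\<zero>}" "b \<in> carrier R" using g by auto
  then have "inv a \<in> carrier R - {\<zero>}" "inv a \<otimes> a = \<one>" using inv_nonzero by simp_all
  then show "\<exists>h\<in>carrier (affine_group R). h \<otimes>\<^bsub>affine_group R\<^esub> g = \<one>\<^bsub>affine_group R\<^esub>"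
    using ab by (intro bexI[of _ "(inv a, \<ominus> (inv a \<otimes> b))"]) (auto simp: r_neg)
qed (simp add: one_not_zero)

text \<open>The affine map \<open>g\<close> sends \<open>0 \<mapsto> snd g\<close> and \<open>1 \<mapsto> fst g + snd g\<close>; since the affine group acts
  regularly on ordered pairs of distinct points, recording the image of \<open>(0, 1)\<close> is a bijection.\<close>

definition affine_flag :: "('a, 'b) ring_scheme \<Rightarrow> ('a \<Rightarrow> 'c) \<Rightarrow> 'a \<times> 'a \<Rightarrow> 'c set set" where
  "affine_flag R \<gamma> g = flag (\<gamma> (snd g)) (\<gamma> (fst g \<oplus>\<^bsub>R\<^esub> snd g))"

lemma (in field) bij_betw_affine_flag:
  assumes \<gamma>: "bij_betw \<gamma> (carrier R) A"
  shows "bij_betw (affine_flag R \<gamma>) (carrier (affine_group R))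
           {flag i j | i j. i \<in> A \<and> j \<in> A \<and> i \<noteq> j}"
proof -
  have \<gamma>_eq_iff: "\<gamma> x = \<gamma> y \<longleftrightarrow> x = y" if "x \<in> carrier R" "y \<in> carrier R" for x y
    using \<gamma> that by (auto simp: bij_betw_def inj_on_eq_iff)
  have \<gamma>_distinct: "\<gamma> b \<noteq> \<gamma> (a \<oplus> b)" if "a \<in> carrier R - {\<zero>}" "b \<in> carrier R" for a b
    using that by (simp add: \<gamma>_eq_iff)
  show ?thesis
    unfolding bij_betw_def
  proof (intro conjI inj_onI equalityI subsetI)
    fix g h
    assume g: "g \<in> carrier (affine_group R)" and h: "h \<in> carrier (affine_group R)"
      and "affine_flag R \<gamma> g = affine_flag R \<gamma> h"
    then have "snd g = snd h \<and> fst g \<oplus> snd g = fst h \<oplus> snd h"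
      unfolding affine_flag_def
      by (auto simp: flag_eq_iff[OF \<gamma>_distinct \<gamma>_distinct] \<gamma>_eq_iff mem_Times_iff)
    then show "g = h" using g h by (cases g, cases h) auto
  next
    fix e assume "e \<in> affine_flag R \<gamma> ` carrier (affine_group R)"
    then show "e \<in> {flag i j | i j. i \<in> A \<and> j \<in> A \<and> i \<noteq> j}"
      unfolding affine_flag_def using \<gamma>_distinct bij_betw_apply[OF \<gamma>] by fastforce
  next
    fix e assume "e \<in> {flag i j | i j. i \<in> A \<and> j \<in> A \<and> i \<noteq> j}"
    then obtain x y where xy: "x \<in> carrier R" "y \<in> carrier R" "x \<noteq> y" "e = flag (\<gamma> x) (\<gamma> y)"
      using \<gamma> by (auto simp: bij_betw_def)
    then have "(y \<ominus> x, x) \<in> carrier (affine_group R)" by (simp add: r_right_minus_eq)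
    moreover have "affine_flag R \<gamma> (y \<ominus> x, x) = e"
      using xy by (simp add: affine_flag_def a_minus_def a_assoc l_neg)
    ultimately show "e \<in> affine_flag R \<gamma> ` carrier (affine_group R)" by blast
  qed
qed

definition affine_connection_set :: "('a, 'b) ring_scheme \<Rightarrow> ('a \<times> 'a) set" where
  "affine_connection_set R =
     {(u, \<zero>\<^bsub>R\<^esub>) | u. u \<in> carrier R - {\<zero>\<^bsub>R\<^esub>, \<one>\<^bsub>R\<^esub>}} \<union> {(\<ominus>\<^bsub>R\<^esub> \<one>\<^bsub>R\<^esub>, \<one>\<^bsub>R\<^esub>)}"

lemma (in field) affine_connection_set_subset: "affine_connection_set R \<subseteq> carrier (affine_group R)"
  unfolding affine_connection_set_def by auto

lemma (in field) one_not_in_affine_connection_set: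
  "\<one>\<^bsub>affine_group R\<^esub> \<notin> affine_connection_set R"
  unfolding affine_connection_set_def by auto

lemma (in field) inv_in_affine_connection_set:
  assumes "s \<in> affine_connection_set R"
  shows "inv\<^bsub>affine_group R\<^esub> s \<in> affine_connection_set R"
proof -
  interpret A: group "affine_group R" by (rule affine_group_is_group)
  have s: "s \<in> carrier (affine_group R)" using assms affine_connection_set_subset by blast
  consider u where "s = (u, \<zero>)" "u \<in> carrier R - {\<zero>, \<one>}" | "s = (\<ominus> \<one>, \<one>)"
    using assms unfolding affine_connection_set_def by blast
  then show ?thesis
  proof cases
    case 1
    then have u: "inv u \<in> carrier R - {\<zero>, \<one>}" "inv u \<otimes> u = \<one>"
      using inv_nonzero[of u] by auto
    then have "inv\<^bsub>affine_group R\<^esub> s = (inv u, \<zero>)" using 1 s by (intro A.inv_equality) auto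
    then show ?thesis using u unfolding affine_connection_set_def by auto
  next
    case 2
    then have "inv\<^bsub>affine_group R\<^esub> s = s" using s by (intro A.inv_equality) (auto simp: l_minus r_minus l_neg)
    then show ?thesis using assms by simp
  qed
qed

lemma (in field) affine_adjacency_iff:
  assumes "a \<in> carrier R - {\<zero>}" "b \<in> carrier R" "c \<in> carrier R - {\<zero>}" "d \<in> carrier R"
  shows "(b = d \<and> a \<oplus> b \<noteq> c \<oplus> d) \<or> (b = c \<oplus> d \<and> a \<oplus> b = d) \<longleftrightarrow>
         (\<exists>u \<in> carrier R - {\<zero>, \<one>}. c = a \<otimes> u \<and> d = b) \<or> (c = \<ominus> a \<and> d = a \<oplus> b)"
proof -
  have "b = d \<and> a \<oplus> b \<noteq> c \<oplus> d \<longleftrightarrow> (\<exists>u \<in> carrier R - {\<zero>, \<one>}. c = a \<otimes> u \<and> d = b)"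
  proof
    assume "b = d \<and> a \<oplus> b \<noteq> c \<oplus> d"
    moreover have "inv a \<otimes> c \<in> carrier R - {\<zero>}" "a \<otimes> (inv a \<otimes> c) = c"
      using assms inv_nonzero[OF assms(1)] by (auto simp: m_assoc[symmetric] integral_iff)
    ultimately show "\<exists>u \<in> carrier R - {\<zero>, \<one>}. c = a \<otimes> u \<and> d = b"
      using assms by (intro bexI[of _ "inv a \<otimes> c"]) auto
  next
    assume "\<exists>u \<in> carrier R - {\<zero>, \<one>}. c = a \<otimes> u \<and> d = b"
    then obtain u where "u \<in> carrier R - {\<zero>, \<one>}" "c = a \<otimes> u" "d = b" by blast
    moreover have "a \<otimes> u \<noteq> a" using calculation assms by (metis DiffD1 DiffD2 insertCI m_lcancel r_one one_closed)
    ultimately show "b = d \<and> a \<oplus> b \<noteq> c \<oplus> d" using assms by auto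
  qed
  moreover have "b = c \<oplus> d \<and> a \<oplus> b = d \<longleftrightarrow> c = \<ominus> a \<and> d = a \<oplus> b"
  proof
    assume "b = c \<oplus> d \<and> a \<oplus> b = d"
    then have "c \<oplus> a \<oplus> b = \<zero> \<oplus> b" and "d = a \<oplus> b" using assms by (auto simp: a_assoc)
    then show "c = \<ominus> a \<and> d = a \<oplus> b" using assms by (auto simp: minus_equality)
  qed (use assms in \<open>simp add: a_assoc[symmetric] l_neg\<close>)
  ultimately show ?thesis by blast
qed

lemma (in field) line_adj_affine_flag_iff:
  assumes \<gamma>: "inj_on \<gamma> (carrier R)"
    and g: "g \<in> carrier (affine_group R)" and h: "h \<in> carrier (affine_group R)"
  shows "line_adj (affine_flag R \<gamma> g) (affine_flag R \<gamma> h) \<longleftrightarrow>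
           (\<exists>k\<in>affine_connection_set R. h = g \<otimes>\<^bsub>affine_group R\<^esub> k)"
proof -
  obtain a b c d where gh: "g = (a, b)" "h = (c, d)" and
    abcd: "a \<in> carrier R - {\<zero>}" "b \<in> carrier R" "c \<in> carrier R - {\<zero>}" "d \<in> carrier R"
    using g h by auto
  have \<gamma>_eq_iff: "\<gamma> x = \<gamma> y \<longleftrightarrow> x = y" if "x \<in> carrier R" "y \<in> carrier R" for x y
    using \<gamma> that by (auto simp: inj_on_eq_iff)
  have "line_adj (affine_flag R \<gamma> g) (affine_flag R \<gamma> h) \<longleftrightarrow>
      (b = d \<and> a \<oplus> b \<noteq> c \<oplus> d) \<or> (b = c \<oplus> d \<and> a \<oplus> b = d)"
    unfolding affine_flag_def gh using abcd
    by (subst line_adj_flag_iff) (simp_all add: \<gamma>_eq_iff)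
  also have "\<dots> \<longleftrightarrow> (\<exists>u \<in> carrier R - {\<zero>, \<one>}. c = a \<otimes> u \<and> d = b) \<or> (c = \<ominus> a \<and> d = a \<oplus> b)"
    using abcd by (rule affine_adjacency_iff)
  also have "\<dots> \<longleftrightarrow> (\<exists>k\<in>affine_connection_set R. h = g \<otimes>\<^bsub>affine_group R\<^esub> k)"
    unfolding affine_connection_set_def gh using abcd by (auto simp: r_minus)
  finally show ?thesis .
qed

lemma (in field) line_graph_B_is_cayley_graph:
  assumes "finite (carrier R)" and "card (carrier R) = n"
  shows "is_cayley_graph (line_verts (B_verts n) B_adj) line_adj"
proof -
  have "card (carrier R) = card {1..n}" using assms(2) by simp
  then obtain \<gamma> where \<gamma>: "bij_betw \<gamma> (carrier R) {1..n}"
    using finite_same_card_bij[OF assms(1) finite_atLeastAtMost] by blast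
  show ?thesis
    unfolding line_verts_B_verts
    by (rule is_cayley_graphI[OF affine_group_is_group bij_betw_affine_flag[OF \<gamma>]
          affine_connection_set_subset one_not_in_affine_connection_set
          inv_in_affine_connection_set line_adj_affine_flag_iff[OF bij_betw_imp_inj_on[OF \<gamma>]]])
qed

theorem theorem3p20:
  fixes n p m :: nat
  assumes "n \<ge> 4" and "prime p" and "m \<ge> 1" and "n = p ^ m"
  shows "is_cayley_graph (line_verts (B_verts n) B_adj) line_adj"
proof -
  obtain F :: "((int list \<times> nat) multiset \<Rightarrow> int) ring"
    where "field F" and "finite (carrier F)" and "card (carrier F) = n"
    using finite_field_exists[OF assms(2,3)] assms(4) by blast
  then show ?thesis by (intro field.line_graph_B_is_cayley_graph)
qed

end
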